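(* Let $n\in\mathbb N$, $r\ge2$, and $\underline m=(m_1,\dots,m_n)\in\mathbb N^n$ with $\gcd(m_i,r)=1$ for all $i$. In the graph $L_{2n-1}\times_{\underline m}\mathbb Z_r$: (i) for $i,j$ with $i+1\le j\le n$, the number of $1$-step $0$-simple paths from $(v_i,0)$ to $(v_j,0)$ is $r$; (ii) for $i,j$ with $i+2\le j\le n$, the number of $2$-step $0$-simple paths from $(v_i,0)$ to $(v_j,0)$ is $\frac{r(r-1)}{2}(j-i-1)$; (iii) for each $i$ with $i+3\le n$, the number of $3$-step $0$-simple paths from $(v_i,0)$ to $(v_{i+3},0)$ is congruent to $-m_{i+2}^{-1}m_{i+1}\frac{r(r-1)(r-2)}{3}$ modulo $r$. Consequently, the number of $0$-simple paths from $(v_i,0)$ to $(v_{i+2},0)$ is $\frac{r(r+1)}{2}$, and the number of $0$-simple paths from $(v_i,0)$ to $(v_{i+3},0)$ is congruent to $-m_{i+2}^{-1}m_{i+1}\frac{r(r-1)(r-2)}{3}$ modulo $r$.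
   Context: $L_{2n-1}\times_{\underline m}\mathbb Z_r$ is the directed graph with vertices $(v_i,k)$ and edges $(e_{i,j},k)$ for $1\le i\le j\le n$, $k\in\mathbb Z_r$, where $s(e_{i,j},k)=(v_i,k-m_i)$ and $r(e_{i,j},k)=(v_j,k)$. A path $\alpha=(e_{i_1,j_1},k_1)\cdots(e_{i_\ell,j_\ell},k_\ell)$ is $0$-simple if $k_1=m_{i_1}$, $k_a\ne0$ for $a\ne\ell$, and $k_\ell=0$ (so it starts at $(v_{i_1},0)$ and ends at $(v_{j_\ell},0)$). A $0$-simple path $\alpha$ is $k$-step if there are integers $t_1<t_2<\dots<t_{k+1}$ with $t_1=i_1$, $t_{k+1}=j_\ell$, such that for each $2\le q\le k$ some edge of $\alpha$ has range in $\{v_{t_q}\}\times\mathbb Z_r$, and all ranges of edges of $\alpha$ lie in $\bigcup_{q=1}^{k+1}\{v_{t_q}\}\times\mathbb Z_r$. For an integer $a$ coprime to $r$, $a^{-1}$ denotes any integer inverse of $a$ modulo $r$. *)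

theory Defs
  imports "HOL-Number_Theory.Cong"
begin

text \<open>The graph L_{2n-1} x_m Z_r.  Vertices (v_i,k) are pairs (i,k) with 1 <= i <= n, k < r
  (k represents a residue mod r).  Edges (e_{i,j},k) are triples (i,j,k) with 1 <= i <= j <= n, k < r.\<close>

type_synonym vert = "nat \<times> nat"
type_synonym edge = "nat \<times> nat \<times> nat"

definition L_edges :: "nat \<Rightarrow> nat \<Rightarrow> edge set" where
  "L_edges n r = {(i, j, k). 1 \<le> i \<and> i \<le> j \<and> j \<le> n \<and> k < r}"

definition L_src :: "nat \<Rightarrow> (nat \<Rightarrow> nat) \<Rightarrow> edge \<Rightarrow> vert" where
  "L_src r m e = (case e of (i, j, k) \<Rightarrow> (i, nat ((int k - int (m i)) mod int r)))"

definition L_rng :: "edge \<Rightarrow> vert" where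
  "L_rng e = (case e of (i, j, k) \<Rightarrow> (j, k))"

definition L_path :: "nat \<Rightarrow> nat \<Rightarrow> (nat \<Rightarrow> nat) \<Rightarrow> edge list \<Rightarrow> bool" where
  "L_path n r m \<alpha> \<longleftrightarrow> \<alpha> \<noteq> [] \<and> set \<alpha> \<subseteq> L_edges n r \<and>
     (\<forall>a. Suc a < length \<alpha> \<longrightarrow> L_rng (\<alpha> ! a) = L_src r m (\<alpha> ! Suc a))"

abbreviation e_i :: "edge \<Rightarrow> nat" where "e_i e \<equiv> fst e"
abbreviation e_j :: "edge \<Rightarrow> nat" where "e_j e \<equiv> fst (snd e)"
abbreviation e_k :: "edge \<Rightarrow> nat" where "e_k e \<equiv> snd (snd e)"

definition zero_simple :: "nat \<Rightarrow> nat \<Rightarrow> (nat \<Rightarrow> nat) \<Rightarrow> edge list \<Rightarrow> bool" where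
  "zero_simple n r m \<alpha> \<longleftrightarrow> L_path n r m \<alpha> \<and>
     e_k (hd \<alpha>) = m (e_i (hd \<alpha>)) mod r \<and>
     (\<forall>a. Suc a < length \<alpha> \<longrightarrow> e_k (\<alpha> ! a) \<noteq> 0) \<and>
     e_k (last \<alpha>) = 0"

definition k_step :: "nat \<Rightarrow> edge list \<Rightarrow> bool" where
  "k_step s \<alpha> \<longleftrightarrow> (\<exists>t :: nat \<Rightarrow> int.
     strict_mono_on {1..s+1} t \<and>
     t 1 = int (e_i (hd \<alpha>)) \<and> t (s+1) = int (e_j (last \<alpha>)) \<and>
     (\<forall>q \<in> {2..s}. \<exists>e \<in> set \<alpha>. int (e_j e) = t q) \<and>
     (\<forall>e \<in> set \<alpha>. int (e_j e) \<in> t ` {1..s+1}))"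

definition zs_paths :: "nat \<Rightarrow> nat \<Rightarrow> (nat \<Rightarrow> nat) \<Rightarrow> nat \<Rightarrow> nat \<Rightarrow> edge list set" where
  "zs_paths n r m i j = {\<alpha>. zero_simple n r m \<alpha> \<and> e_i (hd \<alpha>) = i \<and> e_j (last \<alpha>) = j}"

definition kzs_paths :: "nat \<Rightarrow> nat \<Rightarrow> (nat \<Rightarrow> nat) \<Rightarrow> nat \<Rightarrow> nat \<Rightarrow> nat \<Rightarrow> edge list set" where
  "kzs_paths n r m s i j = {\<alpha>. \<alpha> \<in> zs_paths n r m i j \<and> k_step s \<alpha>}"

end

theory Submission
  imports Defs
begin

(* A 0-simple path starting at (v_i, 0) is determined by the indices j_1 <= ... <= j_l of
   its ranges: leaving v_u raises the residue by m_u, so the second coordinates are forced.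
   Sitting at v_u with residue x, the path either loops at v_u or moves on to the next vertex
   it visits, and it stops the first time the residue is 0; it is k-step exactly when it
   visits k + 1 vertices.  The residue returns to 0 after t_u(x) steps at v_u, where
   t_u(0) = r and t_u permutes {1..r-1}.  Hence there are r paths through two given vertices
   and sum_s t_w(s m_v) = r(r-1)/2 through three.  For four vertices the count is a double
   sum of return times; since t_c(z) = -z c^-1 (mod r) it reduces modulo r to
   m_{i+1} c^-1 sum_{T<r} (T choose 2) = m_{i+1} c^-1 (r choose 3), where c = m_{i+2}.
   Every 0-simple path is k-step for exactly one k, which yields the counts of all
   0-simple paths. *)

section \<open>Return times\<close>

definition return_time :: "nat \<Rightarrow> nat \<Rightarrow> nat \<Rightarrow> nat" where
  "return_time r a x = (LEAST t. 0 < t \<and> (x + t * a) mod r = 0)"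

lemma mod_add_Suc_mult: "((x::nat) + Suc t * a) mod r = ((x + a) mod r + t * a) mod r"
proof -
  have "x + Suc t * a = (x + a) + t * a" by simp
  then show ?thesis by (simp only: mod_add_left_eq)
qed

lemma return_time_exists:
  fixes a r x :: nat
  assumes "coprime a r" "0 < r"
  shows "\<exists>t. 0 < t \<and> (x + t * a) mod r = 0"
proof -
  obtain u where u: "[a * u = Suc 0] (mod r)" using cong_solve_coprime_nat[OF assms(1)] by blast
  define t where "t = (r - x mod r) * u + r"
  have "0 < t" using assms(2) by (simp add: t_def)
  have ta: "t * a = (r - x mod r) * (a * u) + r * a"
    unfolding t_def add_mult_distrib by (simp only: mult_ac)
  have "[x + t * a = x + (r - x mod r) * (a * u) + r * a] (mod r)"
    by (simp only: ta add.assoc cong_refl)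
  also have "[x + (r - x mod r) * (a * u) + r * a = x + (r - x mod r) * 1 + 0] (mod r)"
    by (intro cong_add cong_refl cong_mult) (use u in \<open>auto simp: cong_def\<close>)
  also have "x + (r - x mod r) * 1 + 0 = r * (x div r + 1)"
  proof -
    have m: "x mod r < r" using assms(2) by simp
    have e: "x = r * (x div r) + x mod r" by simp
    have "x + (r - x mod r) = r * (x div r) + r" using m e by linarith
    then show ?thesis by (simp add: algebra_simps)
  qed
  finally have "(x + t * a) mod r = (r * (x div r + 1)) mod r" by (simp only: cong_def)
  then have "(x + t * a) mod r = 0" by (metis mod_mult_self1_is_0)
  then show ?thesis using \<open>0 < t\<close> by (intro exI[where x = t] conjI)
qed

lemma return_time:
  assumes "coprime a r" "0 < r"
  shows "0 < return_time r a x" "(x + return_time r a x * a) mod r = 0"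
  using LeastI_ex[OF return_time_exists[OF assms]] unfolding return_time_def by simp_all

lemma return_time_le: "0 < t \<Longrightarrow> (x + t * a) mod r = 0 \<Longrightarrow> return_time r a x \<le> t"
  unfolding return_time_def by (rule Least_le) simp

lemma return_time_eq_1: "(x + a) mod r = 0 \<Longrightarrow> return_time r a x = 1"
  unfolding return_time_def by (rule Least_equality) auto

lemma return_time_Suc:
  assumes "coprime a r" "0 < r" "(x + a) mod r \<noteq> 0"
  shows "return_time r a x = Suc (return_time r a ((x + a) mod r))"
proof -
  obtain t0 where t0: "0 < t0 \<and> (x + t0 * a) mod r = 0" using return_time_exists[OF assms(1,2), of x] by (elim exE)
  have "return_time r a x = (LEAST t. 0 < t \<and> (x + t * a) mod r = 0)" by (simp add: return_time_def)
  also have "\<dots> = Suc (LEAST t. 0 < Suc t \<and> (x + Suc t * a) mod r = 0)"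
    by (rule Least_Suc[of "\<lambda>t. 0 < t \<and> (x + t * a) mod r = 0", OF t0]) simp
  also have "(LEAST t. 0 < Suc t \<and> (x + Suc t * a) mod r = 0) = return_time r a ((x + a) mod r)"
    unfolding return_time_def mod_add_Suc_mult[of x _ a r]
  proof (intro arg_cong[where f=Least] ext)
    fix t
    show "(0 < Suc t \<and> ((x + a) mod r + t * a) mod r = 0) = (0 < t \<and> ((x + a) mod r + t * a) mod r = 0)"
      using assms(3) by (cases t) auto
  qed
  finally show ?thesis .
qed

lemma return_time_0:
  assumes "coprime a r" "0 < r"
  shows "return_time r a 0 = r"
proof (rule antisym)
  show "return_time r a 0 \<le> r" using assms(2) by (intro return_time_le) simp_all
  have "r dvd return_time r a 0 * a" using return_time(2)[OF assms, of 0] by (simp add: mod_eq_0_iff_dvd)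
  then have "r dvd return_time r a 0"
    using assms(1) by (simp add: coprime_commute coprime_dvd_mult_left_iff)
  then show "r \<le> return_time r a 0" using return_time(1)[OF assms] by (rule dvd_imp_le)
qed

lemma return_time_less:
  assumes "coprime a r" "0 < x" "x < r"
  shows "return_time r a x < r"
proof (rule ccontr)
  assume "\<not> return_time r a x < r"
  then obtain d where d: "return_time r a x = d + r" using le_Suc_ex[of r] by (metis add.commute not_less)
  have "(x + d * a) mod r = (x + d * a + r * a) mod r" by simp
  also have "\<dots> = (x + return_time r a x * a) mod r" by (simp add: d algebra_simps)
  finally have "(x + d * a) mod r = (x + return_time r a x * a) mod r" .
  then have zero: "(x + d * a) mod r = 0" using return_time(2)[OF assms(1)] assms by simp
  have "d \<noteq> 0"
  proof
    assume "d = 0"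
    with zero assms show False by simp
  qed
  then have "return_time r a x \<le> d" using zero by (intro return_time_le) auto
  then show False using d assms by simp
qed

lemma return_time_inj:
  assumes "coprime a r" "0 < r" "x < r" "y < r" "return_time r a x = return_time r a y"
  shows "x = y"
proof -
  have "[x + return_time r a x * a = y + return_time r a x * a] (mod r)"
    using return_time(2)[OF assms(1,2), of x] return_time(2)[OF assms(1,2), of y] assms(5)
    by (simp add: cong_def)
  then have "[x = y] (mod r)" by (simp add: cong_add_rcancel_nat)
  then show ?thesis using assms(3,4) by (simp add: cong_def)
qed

lemma return_time_cong:
  fixes inv :: int
  assumes "coprime a r" "0 < r" "[inv * int a = 1] (mod int r)"
  shows "[int (return_time r a z) = - int z * inv] (mod int r)"
proof -
  have "int r dvd int z + int (return_time r a z) * int a"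
    using return_time(2)[OF assms(1,2), of z] by (metis of_nat_add of_nat_dvd_iff of_nat_mult mod_0_imp_dvd)
  moreover have "int r dvd inv * int a - 1" using assms(3) by (simp add: cong_iff_dvd_diff)
  ultimately have "int r dvd inv * (int z + int (return_time r a z) * int a)
      - int (return_time r a z) * (inv * int a - 1)"
    by (metis dvd_diff dvd_mult)
  then show ?thesis by (simp add: cong_iff_dvd_diff algebra_simps)
qed

lemma bij_betw_mult_mod:
  fixes a r :: nat
  assumes "coprime a r"
  shows "bij_betw (\<lambda>s. s * a mod r) {1..<r} {1..<r}"
proof (rule bij_betw_imageI)
  show inj: "inj_on (\<lambda>s. s * a mod r) {1..<r}"
  proof (rule inj_onI)
    fix s s' assume "s \<in> {1..<r}" "s' \<in> {1..<r}" "s * a mod r = s' * a mod r"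
    then show "s = s'"
      using cong_mult_rcancel_nat[OF assms] by (auto simp: cong_def)
  qed
  have "s * a mod r \<in> {1..<r}" if "s \<in> {1..<r}" for s
  proof -
    have "\<not> r dvd s" using that by (auto dest: dvd_imp_le)
    then have "\<not> r dvd s * a" using assms by (simp add: coprime_commute coprime_dvd_mult_left_iff)
    then have "s * a mod r \<noteq> 0" by (simp add: mod_eq_0_iff_dvd)
    moreover have "s * a mod r < r" using that by simp
    ultimately show ?thesis by simp
  qed
  then show "(\<lambda>s. s * a mod r) ` {1..<r} = {1..<r}" using inj by (intro endo_inj_surj) auto
qed

lemma bij_betw_return_time:
  assumes "coprime a r" "0 < r"
  shows "bij_betw (return_time r a) {1..<r} {1..<r}"
proof (rule bij_betw_imageI)
  show inj: "inj_on (return_time r a) {1..<r}"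
    by (rule inj_onI) (use return_time_inj[OF assms] in simp)
  have "return_time r a x \<in> {1..<r}" if "x \<in> {1..<r}" for x
    using return_time(1)[OF assms, of x] return_time_less[OF assms(1), of x] that by simp
  then have "return_time r a ` {1..<r} \<subseteq> {1..<r}" by blast
  then show "return_time r a ` {1..<r} = {1..<r}" using inj by (intro endo_inj_surj) auto
qed

section \<open>Sums of return times\<close>

lemma sum_return_time_mult_mod:
  assumes "coprime a r" "coprime c r" "0 < r"
  shows "(\<Sum>s\<in>{1..<r}. return_time r c (s * a mod r)) = r * (r - 1) div 2"
proof -
  have "(\<Sum>s\<in>{1..<r}. return_time r c (s * a mod r)) = (\<Sum>y\<in>{1..<r}. return_time r c y)"
    by (rule sum.reindex_bij_betw[OF bij_betw_mult_mod[OF assms(1)]])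
  also have "\<dots> = (\<Sum>y\<in>{1..<r}. y)"
    by (rule sum.reindex_bij_betw[OF bij_betw_return_time[OF assms(2,3)]])
  also have "\<dots> = r * (r - 1) div 2" by (simp add: Sum_Ico_nat)
  finally show ?thesis .
qed

lemma sum_diff_eq_choose_two: "(\<Sum>p\<in>{1..<T}. T - p) = T choose 2"
  using sum.atLeastLessThan_rev[of "\<lambda>p. p" 1 T] by (simp add: Sum_Ico_nat choose_two)

lemma sum_choose_two: "(\<Sum>T\<in>{1..<r}. T choose 2) = r choose 3"
proof (induction r)
  case (Suc r)
  show ?case
  proof (cases "r = 0")
    case False
    then have "(\<Sum>T\<in>{1..<Suc r}. T choose 2) = (r choose 3) + (r choose 2)"
      using Suc.IH by (simp add: sum.atLeastLessThan_Suc)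
    also have "\<dots> = Suc r choose 3" by (simp add: numeral_3_eq_3 numeral_2_eq_2)
    finally show ?thesis .
  qed simp
qed simp

(* 3 (r choose 3) = r (r - 1 choose 2) is divisible by r. *)
lemma choose_3_cong:
  fixes r :: nat
  assumes "2 \<le> r"
  shows "[int (r choose 3) = - (int r * (int r - 1) * (int r - 2) div 3)] (mod int r)"
proof -
  obtain k where r: "r = Suc (Suc k)" using assms by (metis add_2_eq_Suc le_Suc_ex)
  have c3: "(r choose 3) * 3 = r * (Suc k choose 2)"
    using Suc_times_binomial_eq[of "Suc k" 2] by (simp add: r numeral_3_eq_3)
  have c2: "(Suc k choose 2) * 2 = Suc k * k"
    using Suc_times_binomial_eq[of k 1] by (simp add: numeral_2_eq_2)
  have "int r * (int r - 1) * (int r - 2) = int (r * Suc k * k)" by (simp add: r algebra_simps)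
  also have "r * Suc k * k = 6 * (r choose 3)"
  proof -
    have "6 * (r choose 3) = 2 * ((r choose 3) * 3)" by simp
    also have "\<dots> = r * ((Suc k choose 2) * 2)" unfolding c3 by (simp add: algebra_simps)
    also have "\<dots> = r * Suc k * k" unfolding c2 by (simp add: algebra_simps)
    finally show ?thesis by simp
  qed
  finally have div3: "int r * (int r - 1) * (int r - 2) div 3 = 2 * int (r choose 3)" by simp
  have "int (r choose 3) - - (2 * int (r choose 3)) = int r * int (Suc k choose 2)"
    using arg_cong[OF c3, of int] by simp
  then show ?thesis by (simp add: cong_iff_dvd_diff div3)
qed

(* With T = return_time r b y we have y = -T b, so y + p b = (p - T) b modulo r. *)
lemma return_time_step_cong:
  fixes inv :: int
  assumes "coprime b r" "coprime c r" "0 < r" "[inv * int c = 1] (mod int r)"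
  shows "[int (return_time r c ((y + p * b) mod r)) = (int (return_time r b y) - int p) * int b * inv] (mod int r)"
proof -
  define z where "z = (y + p * b) mod r"
  define T where "T = return_time r b y"
  have d1: "int r dvd int (return_time r c z) + int z * inv"
    using return_time_cong[OF assms(2,3,4), of z] by (simp add: cong_iff_dvd_diff)
  have "int z = (int y + int p * int b) mod int r" unfolding z_def by (simp add: zmod_int)
  then have d2: "int r dvd int z - (int y + int p * int b)"
    by (metis mod_mod_trivial cong_def cong_iff_dvd_diff)
  have "(y + T * b) mod r = 0" using return_time(2)[OF assms(1,3), of y] by (simp add: T_def)
  then have d3: "int r dvd int y + int T * int b"
    by (metis of_nat_add of_nat_dvd_iff of_nat_mult mod_0_imp_dvd)
  have "int (return_time r c z) - (int T - int p) * int b * inv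
      = (int (return_time r c z) + int z * inv) - inv * (int z - (int y + int p * int b)) - inv * (int y + int T * int b)"
    by (simp add: algebra_simps)
  also have "int r dvd \<dots>" by (rule dvd_diff[OF dvd_diff[OF d1 dvd_mult[OF d2]] dvd_mult[OF d3]])
  finally show ?thesis unfolding z_def T_def by (simp add: cong_iff_dvd_diff)
qed

lemma sum_return_time_step_cong:
  fixes inv :: int
  assumes "coprime b r" "coprime c r" "0 < r" "[inv * int c = 1] (mod int r)"
  shows "[int (\<Sum>p\<in>{1..<return_time r b y}. return_time r c ((y + p * b) mod r))
    = int b * inv * int (return_time r b y choose 2)] (mod int r)"
proof -
  define T where "T = return_time r b y"
  have "int (\<Sum>p\<in>{1..<T}. return_time r c ((y + p * b) mod r))
      = (\<Sum>p\<in>{1..<T}. int (return_time r c ((y + p * b) mod r)))" by simp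
  also have "[\<dots> = (\<Sum>p\<in>{1..<T}. (int T - int p) * int b * inv)] (mod int r)"
    unfolding T_def by (rule cong_sum) (rule return_time_step_cong[OF assms])
  also have "(\<Sum>p\<in>{1..<T}. (int T - int p) * int b * inv) = int b * inv * (\<Sum>p\<in>{1..<T}. int (T - p))"
    by (simp add: sum_distrib_left sum_distrib_right of_nat_diff algebra_simps)
  also have "(\<Sum>p\<in>{1..<T}. int (T - p)) = int (T choose 2)"
    by (simp only: sum_diff_eq_choose_two flip: of_nat_sum)
  finally show ?thesis unfolding T_def .
qed

section \<open>Walks through a given set of vertices\<close>

(* The edges leaving vertex v with residue x whose ranges are js: an edge out of u adds m u
   to the residue, which must vanish at the last edge and only there. *)
fun ends_at_first_zero :: "nat \<Rightarrow> (nat \<Rightarrow> nat) \<Rightarrow> nat \<Rightarrow> nat \<Rightarrow> nat list \<Rightarrow> bool" where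
  "ends_at_first_zero r m v x [] = False"
| "ends_at_first_zero r m v x [j] = ((x + m v) mod r = 0)"
| "ends_at_first_zero r m v x (j # j2 # js) =
    ((x + m v) mod r \<noteq> 0 \<and> ends_at_first_zero r m j ((x + m v) mod r) (j2 # js))"

definition walks :: "nat \<Rightarrow> (nat \<Rightarrow> nat) \<Rightarrow> nat \<Rightarrow> nat \<Rightarrow> nat set \<Rightarrow> nat list set" where
  "walks r m v x U = {js. ends_at_first_zero r m v x js \<and> sorted (v # js) \<and> insert v (set js) = U}"

lemma ends_at_first_zero_Cons: "ends_at_first_zero r m v x (j # js) = (if js = [] then (x + m v) mod r = 0
   else (x + m v) mod r \<noteq> 0 \<and> ends_at_first_zero r m j ((x + m v) mod r) js)"
  by (cases js) auto

lemma walks_singleton_rec: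
  "walks r m w x {w} = (if (x + m w) mod r = 0 then {[w]} else Cons w ` walks r m w ((x + m w) mod r) {w})"
proof (rule set_eqI)
  fix js
  show "js \<in> walks r m w x {w} \<longleftrightarrow>
    js \<in> (if (x + m w) mod r = 0 then {[w]} else Cons w ` walks r m w ((x + m w) mod r) {w})"
  proof (cases js)
    case Nil then show ?thesis by (auto simp: walks_def)
  next
    case (Cons j rest)
    show ?thesis
      unfolding Cons walks_def by (cases rest) (auto simp: ends_at_first_zero_Cons)
  qed
qed

lemma walks_rec_subset:
  assumes "v < w" "w \<in> U" "\<forall>u\<in>U. v \<le> u" "\<forall>u\<in>U. u \<noteq> v \<longrightarrow> w \<le> u"
    and js: "js \<in> walks r m v x U"
  shows "js \<in> (if (x + m v) mod r = 0 then (if U = {v, w} then {[w]} else {})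
    else Cons v ` walks r m v ((x + m v) mod r) U \<union> Cons w ` walks r m w ((x + m v) mod r) (U - {v}))"
proof -
  obtain j rest where Cons: "js = j # rest" using js by (cases js) (auto simp: walks_def)
  have h: "ends_at_first_zero r m v x (j # rest)" "sorted (v # j # rest)" "insert v (insert j (set rest)) = U"
    using js by (auto simp: walks_def Cons)
  show ?thesis
  proof (cases "j = v")
    case True
    have "rest \<noteq> []" using h(3) assms True by auto
    then show ?thesis using h True by (auto simp: walks_def Cons ends_at_first_zero_Cons)
  next
    case False
    have "\<forall>y\<in>set rest. j \<le> y" using h(2) by simp
    moreover have "w \<in> insert j (set rest)" using assms h(3) by auto
    ultimately have "j \<le> w" by auto
    moreover have "w \<le> j" using assms h(3) False by auto
    ultimately have jw: "j = w" by simp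
    have vr: "v \<notin> set rest" using h(2) assms(1) jw by auto
    show ?thesis
    proof (cases "rest = []")
      case True then show ?thesis using h jw by (auto simp: walks_def Cons)
    next
      case False
      have "insert w (set rest) = U - {v}" using h(3) vr jw assms(1) by auto
      then show ?thesis using h jw False assms by (auto simp: walks_def Cons ends_at_first_zero_Cons)
    qed
  qed
qed

lemma walks_rec_supset:
  assumes "v < w" "w \<in> U" "v \<in> U"
    and js: "js \<in> (if (x + m v) mod r = 0 then (if U = {v, w} then {[w]} else {})
      else Cons v ` walks r m v ((x + m v) mod r) U \<union> Cons w ` walks r m w ((x + m v) mod r) (U - {v}))"
  shows "js \<in> walks r m v x U"
proof (cases "(x + m v) mod r = 0")
  case True then show ?thesis using js assms by (auto simp: walks_def split: if_splits)
next
  case False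
  then consider "js \<in> Cons v ` walks r m v ((x + m v) mod r) U"
    | "js \<in> Cons w ` walks r m w ((x + m v) mod r) (U - {v})"
    using js by auto
  then show ?thesis
  proof cases
    case 1
    then obtain rs where rs: "js = v # rs" "ends_at_first_zero r m v ((x + m v) mod r) rs"
        "sorted (v # rs)" "insert v (set rs) = U"
      by (auto simp: walks_def)
    have "rs \<noteq> []" using rs(2) by auto
    then show ?thesis using rs False by (auto simp: walks_def ends_at_first_zero_Cons)
  next
    case 2
    then obtain rs where rs: "js = w # rs" "ends_at_first_zero r m w ((x + m v) mod r) rs"
        "sorted (w # rs)" "insert w (set rs) = U - {v}"
      by (auto simp: walks_def)
    have "rs \<noteq> []" using rs(2) by auto
    moreover have "sorted (v # w # rs)" using rs(3) assms(1) by auto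
    moreover have "insert v (insert w (set rs)) = U" using rs(4) assms by auto
    ultimately show ?thesis using rs False by (auto simp: walks_def ends_at_first_zero_Cons)
  qed
qed

lemma walks_rec:
  assumes "v < w" "w \<in> U" "\<forall>u\<in>U. v \<le> u" "v \<in> U" "\<forall>u\<in>U. u \<noteq> v \<longrightarrow> w \<le> u"
  shows "walks r m v x U = (if (x + m v) mod r = 0 then (if U = {v, w} then {[w]} else {})
     else Cons v ` walks r m v ((x + m v) mod r) U \<union> Cons w ` walks r m w ((x + m v) mod r) (U - {v}))"
  using walks_rec_subset[OF assms(1,2,3,5)] walks_rec_supset[OF assms(1,2,4)] by blast

lemma card_by_return_time:
  fixes P Q :: "nat \<Rightarrow> nat list set"
  assumes cop: "coprime a r" "0 < r"
    and rec: "\<And>x. x < r \<Longrightarrow> P x = (if (x + a) mod r = 0 then B else Cons v ` P ((x + a) mod r) \<union> Q ((x + a) mod r))"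
    and disj: "\<And>y. y < r \<Longrightarrow> Cons v ` P y \<inter> Q y = {}"
    and finB: "finite B" and finQ: "\<And>y. y < r \<Longrightarrow> finite (Q y)"
  shows "x < r \<Longrightarrow> finite (P x) \<and> card (P x) = card B + (\<Sum>s\<in>{1..<return_time r a x}. card (Q ((x + s * a) mod r)))"
proof (induction "return_time r a x" arbitrary: x rule: nat_less_induct)
  case 1
  show ?case
  proof (cases "(x + a) mod r = 0")
    case True
    then show ?thesis using rec[OF 1(2)] finB return_time_eq_1[OF True] by simp
  next
    case False
    define y where "y = (x + a) mod r"
    have yr: "y < r" using cop by (simp add: y_def)
    have tx: "return_time r a x = Suc (return_time r a y)" using return_time_Suc[OF cop False] by (simp add: y_def)
    have IH: "finite (P y) \<and> card (P y) = card B + (\<Sum>s\<in>{1..<return_time r a y}. card (Q ((y + s * a) mod r)))"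
      using 1(1) tx yr by auto
    have Px: "P x = Cons v ` P y \<union> Q y" using rec[OF 1(2)] False by (simp add: y_def)
    have fin: "finite (P x)" using Px IH finQ[OF yr] by simp
    have "card (P x) = card (Cons v ` P y) + card (Q y)"
      unfolding Px by (rule card_Un_disjoint) (use IH finQ[OF yr] disj[OF yr] in auto)
    also have "card (Cons v ` P y) = card (P y)" by (rule card_image) (simp add: inj_on_def)
    also have "(\<Sum>s\<in>{1..<return_time r a x}. card (Q ((x + s * a) mod r)))
        = card (Q y) + (\<Sum>s\<in>{1..<return_time r a y}. card (Q ((y + s * a) mod r)))"
    proof -
      have "(\<Sum>s\<in>{1..<return_time r a x}. card (Q ((x + s * a) mod r)))
          = (\<Sum>s\<in>{0..<return_time r a y}. card (Q ((x + Suc s * a) mod r)))"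
        unfolding tx by (subst sum.shift_bounds_Suc_ivl[symmetric]) simp
      also have "\<dots> = (\<Sum>s\<in>{0..<return_time r a y}. card (Q ((y + s * a) mod r)))"
        by (intro sum.cong refl) (simp only: y_def mod_add_Suc_mult)
      also have "\<dots> = card (Q y) + (\<Sum>s\<in>{1..<return_time r a y}. card (Q ((y + s * a) mod r)))"
        using return_time[OF cop, of y] yr by (subst sum.atLeast_Suc_lessThan) auto
      finally show ?thesis .
    qed
    ultimately show ?thesis using fin IH by simp
  qed
qed

lemma card_walks_singleton:
  assumes "coprime (m w) r" "0 < r" "x < r"
  shows "finite (walks r m w x {w}) \<and> card (walks r m w x {w}) = 1"
proof -
  have "finite (walks r m w x {w}) \<and> card (walks r m w x {w}) = card {[w]}
      + (\<Sum>s\<in>{1..<return_time r (m w) x}. card ({} :: nat list set))"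
  proof (rule card_by_return_time[where P = "\<lambda>x. walks r m w x {w}" and Q = "\<lambda>_. {}" and v = w,
        OF assms(1,2) _ _ _ _ assms(3)])
    show "walks r m w y {w} = (if (y + m w) mod r = 0 then {[w]}
      else Cons w ` walks r m w ((y + m w) mod r) {w} \<union> {})" for y
      by (subst walks_singleton_rec) simp
  qed auto
  then show ?thesis by simp
qed

lemma card_walks_rec:
  assumes cop: "coprime (m v) r" "0 < r" and "x < r"
    and U: "v < w" "v \<in> U" "w \<in> U" "\<forall>u\<in>U. v \<le> u" "\<forall>u\<in>U. u \<noteq> v \<longrightarrow> w \<le> u"
    and fin: "\<And>y. y < r \<Longrightarrow> finite (walks r m w y (U - {v}))"
  shows "finite (walks r m v x U) \<and> card (walks r m v x U) = (if U = {v, w} then 1 else 0)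
      + (\<Sum>s\<in>{1..<return_time r (m v) x}. card (walks r m w ((x + s * m v) mod r) (U - {v})))"
proof -
  have "finite (walks r m v x U) \<and> card (walks r m v x U) = card (if U = {v, w} then {[w]} else {})
      + (\<Sum>s\<in>{1..<return_time r (m v) x}. card (Cons w ` walks r m w ((x + s * m v) mod r) (U - {v})))"
  proof (rule card_by_return_time[where P = "\<lambda>x. walks r m v x U" and v = v, OF cop _ _ _ _ \<open>x < r\<close>])
    show "walks r m v y U = (if (y + m v) mod r = 0 then (if U = {v, w} then {[w]} else {})
      else Cons v ` walks r m v ((y + m v) mod r) U \<union> Cons w ` walks r m w ((y + m v) mod r) (U - {v}))" for y
      by (rule walks_rec[OF U(1,3,4,2,5)])
  qed (use U fin in auto)
  then show ?thesis by (simp add: card_image)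
qed

lemma card_walks_pair:
  assumes "v < w" "coprime (m v) r" "coprime (m w) r" "0 < r" "x < r"
  shows "finite (walks r m v x {v, w}) \<and> card (walks r m v x {v, w}) = return_time r (m v) x"
proof -
  have U: "{v, w} - {v} = {w}" using assms(1) by auto
  have single: "finite (walks r m w y ({v, w} - {v})) \<and> card (walks r m w y ({v, w} - {v})) = 1"
    if "y < r" for y
    unfolding U using card_walks_singleton[of m w r, OF assms(3,4) that] .
  have "finite (walks r m v x {v, w}) \<and> card (walks r m v x {v, w}) = (if {v, w} = {v, w} then 1 else 0)
      + (\<Sum>s\<in>{1..<return_time r (m v) x}. card (walks r m w ((x + s * m v) mod r) ({v, w} - {v})))"
    by (rule card_walks_rec[of m v r x w "{v, w}", OF assms(2,4,5,1)]) (use single assms(1) in auto)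
  also have "(\<Sum>s\<in>{1..<return_time r (m v) x}. card (walks r m w ((x + s * m v) mod r) ({v, w} - {v})))
      = return_time r (m v) x - 1"
    using single assms(4) by simp
  finally show ?thesis using return_time(1)[OF assms(2,4), of x] by simp
qed

lemma card_walks_triple:
  assumes "v < w" "w < u" "coprime (m v) r" "coprime (m w) r" "coprime (m u) r" "0 < r" "x < r"
  shows "finite (walks r m v x {v, w, u}) \<and>
    card (walks r m v x {v, w, u}) = (\<Sum>s\<in>{1..<return_time r (m v) x}. return_time r (m w) ((x + s * m v) mod r))"
proof -
  have U: "{v, w, u} - {v} = {w, u}" using assms(1,2) by auto
  have pair: "finite (walks r m w y ({v, w, u} - {v}))
      \<and> card (walks r m w y ({v, w, u} - {v})) = return_time r (m w) y" if "y < r" for y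
    unfolding U using card_walks_pair[of w u m r, OF assms(2,4,5,6) that] .
  have "finite (walks r m v x {v, w, u}) \<and> card (walks r m v x {v, w, u}) =
      (if {v, w, u} = {v, w} then 1 else 0)
      + (\<Sum>s\<in>{1..<return_time r (m v) x}. card (walks r m w ((x + s * m v) mod r) ({v, w, u} - {v})))"
    by (rule card_walks_rec[of m v r x w "{v, w, u}", OF assms(3,6,7,1)]) (use pair assms(1,2) in auto)
  moreover have "{v, w, u} \<noteq> {v, w}"
  proof
    assume "{v, w, u} = {v, w}"
    then have "u \<in> {v, w}" by blast
    with assms(1,2) show False by auto
  qed
  moreover have "(\<Sum>s\<in>{1..<return_time r (m v) x}. card (walks r m w ((x + s * m v) mod r) ({v, w, u} - {v})))
      = (\<Sum>s\<in>{1..<return_time r (m v) x}. return_time r (m w) ((x + s * m v) mod r))"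
    using pair assms(6) by (intro sum.cong) auto
  ultimately show ?thesis by simp
qed

lemma card_walks_quadruple:
  assumes "v < w" "w < u" "u < z" "coprime (m v) r" "coprime (m w) r" "coprime (m u) r" "coprime (m z) r"
    "0 < r" "x < r"
  shows "finite (walks r m v x {v, w, u, z}) \<and> card (walks r m v x {v, w, u, z}) =
    (\<Sum>s\<in>{1..<return_time r (m v) x}. card (walks r m w ((x + s * m v) mod r) {w, u, z}))"
proof -
  have U: "{v, w, u, z} - {v} = {w, u, z}" using assms(1-3) by auto
  have "{v, w, u, z} \<noteq> {v, w}"
  proof
    assume "{v, w, u, z} = {v, w}"
    then have "u \<in> {v, w}" by blast
    with assms(1,2) show False by auto
  qed
  moreover have "finite (walks r m w y ({v, w, u, z} - {v}))" if "y < r" for y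
    unfolding U using card_walks_triple[of w u z m r, OF assms(2,3,5,6,7,8) that] by simp
  then have "finite (walks r m v x {v, w, u, z}) \<and> card (walks r m v x {v, w, u, z}) =
      (if {v, w, u, z} = {v, w} then 1 else 0)
      + (\<Sum>s\<in>{1..<return_time r (m v) x}. card (walks r m w ((x + s * m v) mod r) ({v, w, u, z} - {v})))"
    by (intro card_walks_rec[of m v r x w "{v, w, u, z}", OF assms(4,8,9,1)]) (use assms(1-3) in auto)
  ultimately show ?thesis unfolding U by simp
qed

lemma card_walks_pair_from_0:
  assumes "v < w" "coprime (m v) r" "coprime (m w) r" "0 < r"
  shows "finite (walks r m v 0 {v, w}) \<and> card (walks r m v 0 {v, w}) = r"
  using card_walks_pair[of v w m r 0, OF assms assms(4)] return_time_0[OF assms(2,4)] by simp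

lemma card_walks_triple_from_0:
  assumes "v < w" "w < u" "coprime (m v) r" "coprime (m w) r" "coprime (m u) r" "0 < r"
  shows "finite (walks r m v 0 {v, w, u}) \<and> card (walks r m v 0 {v, w, u}) = r * (r - 1) div 2"
  using card_walks_triple[of v w u m r 0, OF assms assms(6)] return_time_0[OF assms(3,6)]
    sum_return_time_mult_mod[OF assms(3,4,6)] by simp

lemma card_walks_quadruple_from_0_cong:
  assumes "v < w" "w < u" "u < z" "coprime (m v) r" "coprime (m w) r" "coprime (m u) r" "coprime (m z) r"
    "2 \<le> r"
  shows "finite (walks r m v 0 {v, w, u, z}) \<and> (\<forall>inv :: int. [inv * int (m u) = 1] (mod int r) \<longrightarrow>
    [int (card (walks r m v 0 {v, w, u, z})) = - inv * int (m w) * (int r * (int r - 1) * (int r - 2) div 3)] (mod int r))"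
proof (intro conjI allI impI)
  have r: "0 < r" using assms(8) by simp
  note quadruple = card_walks_quadruple[of v w u z m r 0, OF assms(1-7) r r]
  then show "finite (walks r m v 0 {v, w, u, z})" ..
  fix inv :: int assume inv: "[inv * int (m u) = 1] (mod int r)"
  define F where "F y = (\<Sum>p\<in>{1..<return_time r (m w) y}. return_time r (m u) ((y + p * m w) mod r))" for y
  have "card (walks r m v 0 {v, w, u, z}) = (\<Sum>s\<in>{1..<r}. card (walks r m w (s * m v mod r) {w, u, z}))"
    using quadruple return_time_0[OF assms(4) r] by simp
  also have "\<dots> = (\<Sum>s\<in>{1..<r}. F (s * m v mod r))"
    using card_walks_triple[of w u z m r, OF assms(2,3,5,6,7) r] r by (intro sum.cong) (simp_all add: F_def)
  also have "\<dots> = (\<Sum>y\<in>{1..<r}. F y)"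
    by (rule sum.reindex_bij_betw[OF bij_betw_mult_mod[OF assms(4)]])
  finally have "int (card (walks r m v 0 {v, w, u, z})) = (\<Sum>y\<in>{1..<r}. int (F y))" by simp
  also have "[\<dots> = (\<Sum>y\<in>{1..<r}. int (m w) * inv * int (return_time r (m w) y choose 2))] (mod int r)"
    unfolding F_def by (rule cong_sum) (rule sum_return_time_step_cong[OF assms(5,6) r inv])
  also have "(\<Sum>y\<in>{1..<r}. int (m w) * inv * int (return_time r (m w) y choose 2))
      = int (m w) * inv * int (\<Sum>y\<in>{1..<r}. return_time r (m w) y choose 2)"
    by (simp add: sum_distrib_left)
  also have "(\<Sum>y\<in>{1..<r}. return_time r (m w) y choose 2) = r choose 3"
    using sum.reindex_bij_betw[OF bij_betw_return_time[OF assms(5) r], of "\<lambda>T. T choose 2"]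
      sum_choose_two[of r] by simp
  also have "[int (m w) * inv * int (r choose 3)
      = int (m w) * inv * - (int r * (int r - 1) * (int r - 2) div 3)] (mod int r)"
    by (rule cong_mult[OF cong_refl choose_3_cong[OF assms(8)]])
  finally show "[int (card (walks r m v 0 {v, w, u, z}))
      = - inv * int (m w) * (int r * (int r - 1) * (int r - 2) div 3)] (mod int r)"
    by (simp add: algebra_simps)
qed

section \<open>Paths as range sequences\<close>

definition range_seqs :: "nat \<Rightarrow> (nat \<Rightarrow> nat) \<Rightarrow> nat \<Rightarrow> nat \<Rightarrow> nat list set" where
  "range_seqs r m i j = {js. ends_at_first_zero r m i 0 js \<and> sorted (i # js) \<and> last js = j}"

fun path_of :: "nat \<Rightarrow> (nat \<Rightarrow> nat) \<Rightarrow> nat \<Rightarrow> nat \<Rightarrow> nat list \<Rightarrow> edge list" where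
  "path_of r m v x [] = []"
| "path_of r m v x (j # js) = (v, j, (x + m v) mod r) # path_of r m j ((x + m v) mod r) js"

lemma map_range_path_of: "map e_j (path_of r m v x js) = js"
  by (induction js arbitrary: v x) auto

lemma path_of_eq_Nil_iff: "(path_of r m v x js = []) = (js = [])"
  by (cases js) auto

lemma hd_path_of: "js \<noteq> [] \<Longrightarrow> hd (path_of r m v x js) = (v, hd js, (x + m v) mod r)"
  by (cases js) auto

lemma last_range_path_of: "js \<noteq> [] \<Longrightarrow> e_j (last (path_of r m v x js)) = last js"
proof -
  assume "js \<noteq> []"
  then have "path_of r m v x js \<noteq> []" by (simp add: path_of_eq_Nil_iff)
  then have "e_j (last (path_of r m v x js)) = last (map e_j (path_of r m v x js))"
    by (simp add: last_map)
  then show ?thesis by (simp add: map_range_path_of)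
qed

lemma range_set_path_of: "e_j ` set (path_of r m v x js) = set js"
  by (metis map_range_path_of set_map)

lemma successively_iff_nth: "successively P xs \<longleftrightarrow> (\<forall>a. Suc a < length xs \<longrightarrow> P (xs ! a) (xs ! Suc a))"
  by (induction P xs rule: successively.induct) (auto simp: less_Suc_eq_0_disj)

lemma all_butlast_iff_nth: "(\<forall>a. Suc a < length xs \<longrightarrow> f (xs ! a) \<noteq> (0::nat)) \<longleftrightarrow> (\<forall>e\<in>set (butlast xs). f e \<noteq> 0)"
proof
  assume h: "\<forall>a. Suc a < length xs \<longrightarrow> f (xs ! a) \<noteq> 0"
  show "\<forall>e\<in>set (butlast xs). f e \<noteq> 0"
  proof
    fix e assume "e \<in> set (butlast xs)"
    then obtain a where a: "a < length (butlast xs)" "e = butlast xs ! a" by (auto simp: in_set_conv_nth)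
    then have "e = xs ! a" by (simp add: nth_butlast)
    moreover have "Suc a < length xs" using a(1) by simp
    ultimately show "f e \<noteq> 0" using h by simp
  qed
next
  assume h: "\<forall>e\<in>set (butlast xs). f e \<noteq> 0"
  show "\<forall>a. Suc a < length xs \<longrightarrow> f (xs ! a) \<noteq> 0"
  proof (intro allI impI)
    fix a assume a: "Suc a < length xs"
    then have "a < length (butlast xs)" by simp
    then have "butlast xs ! a \<in> set (butlast xs)" "butlast xs ! a = xs ! a"
      by (rule nth_mem, rule nth_butlast)
    then show "f (xs ! a) \<noteq> 0" using h by metis
  qed
qed
lemma ends_at_first_zero_iff: "ends_at_first_zero r m v x js \<longleftrightarrow> js \<noteq> [] \<and> (\<forall>e\<in>set (butlast (path_of r m v x js)). e_k e \<noteq> 0)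
   \<and> e_k (last (path_of r m v x js)) = 0"
proof (induction r m v x js rule: ends_at_first_zero.induct)
  case (3 r m v x j j2 js)
  have ne: "path_of r m j ((x + m v) mod r) (j2 # js) \<noteq> []" by simp
  show ?case using "3.IH" ne by simp
qed auto

lemma set_path_of_subset_L_edges_iff:
  assumes "0 < r"
  shows "set (path_of r m v x js) \<subseteq> L_edges n r \<longleftrightarrow> js = [] \<or> (1 \<le> v \<and> sorted (v # js) \<and> (\<forall>y\<in>set js. y \<le> n))"
proof (induction js arbitrary: v x)
  case Nil then show ?case by simp
next
  case (Cons j js)
  define k where "k = (x + m v) mod r"
  have k: "k < r" using assms by (simp add: k_def)
  have mk: "path_of r m v x (j # js) = (v, j, k) # path_of r m j k js" by (simp add: k_def)
  have ed: "((v, j, k) \<in> L_edges n r) = (1 \<le> v \<and> v \<le> j \<and> j \<le> n)" using k by (simp add: L_edges_def)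
  have IH: "set (path_of r m j k js) \<subseteq> L_edges n r \<longleftrightarrow> js = [] \<or> (1 \<le> j \<and> sorted (j # js) \<and> (\<forall>y\<in>set js. y \<le> n))"
    by (rule Cons.IH)
  show ?case
  proof (cases js)
    case Nil then show ?thesis unfolding mk using ed by simp
  next
    case (Cons j2 js2)
    have "set (path_of r m v x (j # js)) \<subseteq> L_edges n r \<longleftrightarrow> (1 \<le> v \<and> v \<le> j \<and> j \<le> n) \<and> (1 \<le> j \<and> sorted (j # js) \<and> (\<forall>y\<in>set js. y \<le> n))"
      unfolding mk using ed IH Cons by simp
    also have "\<dots> \<longleftrightarrow> 1 \<le> v \<and> sorted (v # j # js) \<and> (\<forall>y\<in>set (j # js). y \<le> n)"
      by auto
    finally show ?thesis by simp
  qed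
qed

lemma nat_diff_mod_of_add_mod:
  assumes "k < r"
  shows "nat ((int ((k + a) mod r) - int a) mod int r) = k"
  using assms by (simp add: zmod_int mod_diff_left_eq)

lemma add_mod_of_nat_diff_mod:
  assumes "k2 < r" "k = nat ((int k2 - int a) mod int r)"
  shows "k2 = (k + a) mod r"
proof -
  have r0: "0 < r" using assms by simp
  have "int k = (int k2 - int a) mod int r" using assms r0 by simp
  then have "int ((k + a) mod r) = ((int k2 - int a) mod int r + int a) mod int r"
    by (simp add: zmod_int)
  also have "\<dots> = int k2 mod int r" by (simp add: mod_add_left_eq)
  also have "\<dots> = int k2" using assms by simp
  finally show ?thesis by simp
qed

lemma successively_path_of:
  assumes "0 < r"
  shows "successively (\<lambda>e1 e2. L_rng e1 = L_src r m e2) (path_of r m v x js)"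
proof (induction js arbitrary: v x)
  case Nil then show ?case by simp
next
  case (Cons j js)
  show ?case
  proof (cases js)
    case Nil then show ?thesis by simp
  next
    case (Cons j2 js2)
    have "L_rng (v, j, (x + m v) mod r) = L_src r m (j, j2, ((x + m v) mod r + m j) mod r)"
      using nat_diff_mod_of_add_mod[of "(x + m v) mod r" r "m j"] assms by (simp add: L_rng_def L_src_def)
    then show ?thesis using Cons.IH[of j "(x + m v) mod r"] Cons by simp
  qed
qed

lemma path_eq_path_of:
  assumes "0 < r"
  shows "\<alpha> \<noteq> [] \<Longrightarrow> set \<alpha> \<subseteq> L_edges n r \<Longrightarrow> successively (\<lambda>e1 e2. L_rng e1 = L_src r m e2) \<alpha>
    \<Longrightarrow> e_i (hd \<alpha>) = v \<Longrightarrow> e_k (hd \<alpha>) = (x + m v) mod r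
    \<Longrightarrow> \<alpha> = path_of r m v x (map e_j \<alpha>)"
proof (induction \<alpha> arbitrary: v x)
  case Nil then show ?case by simp
next
  case (Cons e \<beta>)
  obtain i j k where e: "e = (i, j, k)" by (cases e) auto
  have ik: "i = v" "k = (x + m v) mod r" using Cons.prems e by auto
  show ?case
  proof (cases \<beta>)
    case Nil then show ?thesis using e ik by simp
  next
    case (Cons e2 \<gamma>)
    obtain i2 j2 k2 where e2: "e2 = (i2, j2, k2)" by (cases e2) auto
    have rel: "L_rng e = L_src r m e2" using Cons.prems(3) Cons by simp
    then have i2: "i2 = j" and kk: "k = nat ((int k2 - int (m i2)) mod int r)"
      using e e2 by (auto simp: L_rng_def L_src_def)
    have "k2 < r" using Cons.prems(2) Cons e2 by (auto simp: L_edges_def)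
    then have k2: "k2 = (k + m j) mod r" using add_mod_of_nat_diff_mod[of k2 r k "m j"] kk i2 by simp
    have "\<beta> = path_of r m j k (map e_j \<beta>)"
    proof (rule Cons.IH)
      show "\<beta> \<noteq> []" using Cons by simp
      show "set \<beta> \<subseteq> L_edges n r" using Cons.prems(2) by simp
      show "successively (\<lambda>e1 e2. L_rng e1 = L_src r m e2) \<beta>"
        using Cons.prems(3) unfolding successively_Cons by auto
      show "e_i (hd \<beta>) = j" using Cons e2 i2 by simp
      show "e_k (hd \<beta>) = (k + m j) mod r" using Cons e2 k2 by simp
    qed
    then show ?thesis using e ik by simp
  qed
qed

lemma sorted_le_last: "sorted xs \<Longrightarrow> y \<in> set xs \<Longrightarrow> y \<le> last xs"
proof (induction xs)
  case Nil then show ?case by simp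
next
  case (Cons x xs)
  show ?case
  proof (cases "xs = []")
    case True then show ?thesis using Cons.prems by simp
  next
    case False
    have "last xs \<in> set xs" using False by simp
    then show ?thesis using Cons False by auto
  qed
qed

lemma zero_simple_path_of_iff:
  assumes "0 < r" "1 \<le> i"
  shows "zero_simple n r m (path_of r m i 0 js) \<longleftrightarrow>
    ends_at_first_zero r m i 0 js \<and> sorted (i # js) \<and> (\<forall>y\<in>set js. y \<le> n)"
proof (cases "js = []")
  case False
  have "L_path n r m (path_of r m i 0 js) \<longleftrightarrow> sorted (i # js) \<and> (\<forall>y\<in>set js. y \<le> n)"
    using False assms set_path_of_subset_L_edges_iff[OF assms(1), of m i 0 js n]
      successively_path_of[OF assms(1), unfolded successively_iff_nth]
    by (simp add: L_path_def path_of_eq_Nil_iff)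
  moreover have "(\<forall>a. Suc a < length (path_of r m i 0 js) \<longrightarrow> e_k (path_of r m i 0 js ! a) \<noteq> 0)
      \<and> e_k (last (path_of r m i 0 js)) = 0 \<longleftrightarrow> ends_at_first_zero r m i 0 js"
    using False all_butlast_iff_nth[of "path_of r m i 0 js" e_k] by (simp add: ends_at_first_zero_iff)
  ultimately show ?thesis
    using False by (auto simp: zero_simple_def hd_path_of)
qed (simp add: zero_simple_def L_path_def)

lemma zero_simple_eq_path_of:
  assumes "0 < r" "zero_simple n r m \<alpha>"
  shows "\<alpha> = path_of r m (e_i (hd \<alpha>)) 0 (map e_j \<alpha>)"
  using assms by (intro path_eq_path_of) (auto simp: zero_simple_def L_path_def successively_iff_nth)

lemma zs_paths_eq_image:
  assumes "0 < r" "1 \<le> i" "j \<le> n"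
  shows "zs_paths n r m i j = path_of r m i 0 ` range_seqs r m i j"
proof (intro set_eqI iffI)
  fix \<alpha> assume \<alpha>: "\<alpha> \<in> zs_paths n r m i j"
  then have "\<alpha> = path_of r m i 0 (map e_j \<alpha>)"
    using zero_simple_eq_path_of[OF assms(1)] by (auto simp: zs_paths_def)
  moreover have "\<alpha> \<noteq> []" using \<alpha> by (simp add: zs_paths_def zero_simple_def L_path_def)
  ultimately show "\<alpha> \<in> path_of r m i 0 ` range_seqs r m i j"
    using \<alpha> zero_simple_path_of_iff[OF assms(1,2), of n m "map e_j \<alpha>"]
    by (auto simp: zs_paths_def range_seqs_def last_map intro!: image_eqI[of _ _ "map e_j \<alpha>"])
next
  fix \<alpha> assume "\<alpha> \<in> path_of r m i 0 ` range_seqs r m i j"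
  then obtain js where \<alpha>: "\<alpha> = path_of r m i 0 js" and js: "js \<in> range_seqs r m i j" by blast
  have "js \<noteq> []" using js by (auto simp: range_seqs_def)
  moreover have "\<forall>y\<in>set js. y \<le> n"
    using js assms(3) by (auto simp: range_seqs_def dest!: sorted_le_last[of js])
  ultimately show "\<alpha> \<in> zs_paths n r m i j"
    using js zero_simple_path_of_iff[OF assms(1,2), of n m js]
    by (simp add: \<alpha> zs_paths_def range_seqs_def hd_path_of last_range_path_of)
qed

section \<open>Step numbers\<close>

lemma card_eq_if_strict_mono_enumeration:
  fixes t :: "nat \<Rightarrow> int" and R :: "nat set"
  assumes t: "strict_mono_on {1..s+1} t" "t 1 = int i" "t (s+1) = int j"
      "\<forall>q\<in>{2..s}. t q \<in> int ` R" "int ` R \<subseteq> t ` {1..s+1}"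
    and "j \<in> R"
  shows "card (insert i R) = s + 1"
proof -
  have "t ` {1..s+1} = int ` insert i R"
  proof
    show "t ` {1..s+1} \<subseteq> int ` insert i R"
    proof
      fix y assume "y \<in> t ` {1..s+1}"
      then obtain q where q: "q \<in> {1..s+1}" "y = t q" by blast
      then consider "q = 1" | "q \<in> {2..s}" | "q = s + 1" by fastforce
      then show "y \<in> int ` insert i R" using t(2-4) \<open>j \<in> R\<close> q(2) by cases auto
    qed
    show "int ` insert i R \<subseteq> t ` {1..s+1}" using t(2,5) by force
  qed
  then have "card (int ` insert i R) = s + 1"
    using card_image[OF strict_mono_on_imp_inj_on[OF t(1)]] by simp
  moreover have "card (int ` insert i R) = card (insert i R)" by (rule card_image) (simp add: inj_on_def)
  ultimately show ?thesis by simp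
qed

(* The enumeration is read off the sorted list of insert i R. *)
lemma strict_mono_enumeration_if_card:
  fixes R :: "nat set"
  assumes "finite R" "j \<in> R" "\<forall>y\<in>R. i \<le> y \<and> y \<le> j" "card (insert i R) = s + 1"
  obtains t :: "nat \<Rightarrow> int" where "strict_mono_on {1..s+1} t" "t 1 = int i" "t (s+1) = int j"
    "\<forall>q\<in>{2..s}. t q \<in> int ` R" "int ` R \<subseteq> t ` {1..s+1}"
proof -
  define xs where "xs = sorted_list_of_set (insert i R)"
  have xs: "sorted_wrt (<) xs" "set xs = insert i R" "length xs = s + 1"
    unfolding xs_def using assms(1,4)
    by (simp_all only: strict_sorted_list_of_set set_sorted_list_of_set length_sorted_list_of_set finite_insert)
  have less: "xs ! a < xs ! b" if "a < b" "b < s + 1" for a b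
    using sorted_wrt_nth_less[OF xs(1)] that xs(3) by simp
  have bounds: "i \<le> xs ! a \<and> xs ! a \<le> j" if "a < s + 1" for a
  proof -
    have "xs ! a \<in> insert i R" using nth_mem[of a xs] that xs(2,3) by simp
    then show ?thesis using assms(2,3) by auto
  qed
  have index: "\<exists>a < s + 1. xs ! a = y" if "y \<in> insert i R" for y
  proof -
    have "y \<in> set xs" using that xs(2) by simp
    then show ?thesis unfolding in_set_conv_nth xs(3) .
  qed
  have first: "xs ! 0 = i"
  proof -
    obtain a where a: "a < s + 1" "xs ! a = i" using index[of i] by blast
    have "xs ! 0 \<le> xs ! a" using less[of 0 a] a(1) by (cases a) auto
    then show ?thesis using bounds[of 0] a(2) by simp
  qed
  have last: "xs ! s = j"
  proof -
    obtain a where a: "a < s + 1" "xs ! a = j" using index[of j] assms(2) by blast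
    have "xs ! a \<le> xs ! s" using less[of a s] a(1) by (cases "a = s") auto
    then show ?thesis using bounds[of s] a(2) by simp
  qed
  define t where "t q = int (xs ! (q - 1))" for q
  show thesis
  proof
    show "strict_mono_on {1..s+1} t"
    proof (rule strict_mono_onI)
      fix q q' assume "q \<in> {1..s+1}" "q' \<in> {1..s+1}" "q < q'"
      then show "t q < t q'" using less[of "q - 1" "q' - 1"] by (simp add: t_def)
    qed
    show "t 1 = int i" "t (s+1) = int j" using first last by (simp_all add: t_def)
    show "\<forall>q\<in>{2..s}. t q \<in> int ` R"
    proof
      fix q assume q: "q \<in> {2..s}"
      then have "i < xs ! (q - 1)" using first less[of 0 "q - 1"] by auto
      moreover have "q - 1 < length xs" using q unfolding xs(3) atLeastAtMost_iff by linarith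
      then have "xs ! (q - 1) \<in> insert i R" using nth_mem xs(2) by blast
      ultimately have "xs ! (q - 1) \<in> R" by auto
      then show "t q \<in> int ` R" by (simp add: t_def)
    qed
    show "int ` R \<subseteq> t ` {1..s+1}"
    proof
      fix y assume "y \<in> int ` R"
      then obtain z where z: "z \<in> R" "y = int z" by blast
      then obtain a where a: "a < s + 1" "xs ! a = z" using index[of z] by blast
      have "y = t (a + 1)" using z(2) a(2) by (simp add: t_def)
      moreover have "a + 1 \<in> {1..s+1}" using a(1) by simp
      ultimately show "y \<in> t ` {1..s+1}" by blast
    qed
  qed
qed

lemma range_seqs_bounds:
  assumes "js \<in> range_seqs r m i j"
  shows "js \<noteq> []" "j \<in> set js" "\<forall>y\<in>set js. i \<le> y \<and> y \<le> j"
proof -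
  have js: "ends_at_first_zero r m i 0 js" "sorted (i # js)" "last js = j"
    using assms by (simp_all add: range_seqs_def)
  show ne: "js \<noteq> []" using js(1) by (cases js) simp_all
  show "j \<in> set js" using ne js(3) last_in_set by blast
  show "\<forall>y\<in>set js. i \<le> y \<and> y \<le> j" using js(2,3) sorted_le_last[of js] by simp
qed

lemma k_step_path_of_iff:
  assumes "js \<in> range_seqs r m i j"
  shows "k_step s (path_of r m i 0 js) \<longleftrightarrow> card (insert i (set js)) = s + 1"
proof -
  note js = range_seqs_bounds[OF assms]
  let ?\<alpha> = "path_of r m i 0 js"
  have conv: "(\<forall>q\<in>{2..s}. \<exists>e\<in>set ?\<alpha>. int (e_j e) = t q) \<longleftrightarrow> (\<forall>q\<in>{2..s}. t q \<in> int ` set js)"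
    for t :: "nat \<Rightarrow> int"
    unfolding range_set_path_of[of r m i 0 js, symmetric]
    by force
  have conv': "(\<forall>e\<in>set ?\<alpha>. int (e_j e) \<in> T) \<longleftrightarrow> int ` set js \<subseteq> T" for T :: "int set"
    unfolding range_set_path_of[of r m i 0 js, symmetric] by (simp add: image_subset_iff)
  have ends: "e_i (hd ?\<alpha>) = i" "e_j (last ?\<alpha>) = j"
    using hd_path_of[OF js(1), of r m i 0] last_range_path_of[OF js(1), of r m i 0] assms
    by (simp_all add: range_seqs_def)
  have "k_step s ?\<alpha> \<longleftrightarrow> (\<exists>t :: nat \<Rightarrow> int. strict_mono_on {1..s+1} t \<and>
      t 1 = int i \<and> t (s+1) = int j \<and> (\<forall>q\<in>{2..s}. t q \<in> int ` set js) \<and> int ` set js \<subseteq> t ` {1..s+1})"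
    unfolding k_step_def conv conv' ends ..
  also have "\<dots> \<longleftrightarrow> card (insert i (set js)) = s + 1"
  proof
    assume "\<exists>t :: nat \<Rightarrow> int. strict_mono_on {1..s+1} t \<and> t 1 = int i \<and> t (s+1) = int j
      \<and> (\<forall>q\<in>{2..s}. t q \<in> int ` set js) \<and> int ` set js \<subseteq> t ` {1..s+1}"
    then obtain t :: "nat \<Rightarrow> int" where "strict_mono_on {1..s+1} t" "t 1 = int i" "t (s+1) = int j"
      "\<forall>q\<in>{2..s}. t q \<in> int ` set js" "int ` set js \<subseteq> t ` {1..s+1}" by (elim exE conjE)
    then show "card (insert i (set js)) = s + 1" by (rule card_eq_if_strict_mono_enumeration[OF _ _ _ _ _ js(2)])
  next
    assume "card (insert i (set js)) = s + 1"
    then obtain t :: "nat \<Rightarrow> int" where "strict_mono_on {1..s+1} t" "t 1 = int i" "t (s+1) = int j"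
      "\<forall>q\<in>{2..s}. t q \<in> int ` set js" "int ` set js \<subseteq> t ` {1..s+1}"
      by (rule strict_mono_enumeration_if_card[OF finite_set js(2,3)])
    then show "\<exists>t :: nat \<Rightarrow> int. strict_mono_on {1..s+1} t \<and> t 1 = int i \<and> t (s+1) = int j
      \<and> (\<forall>q\<in>{2..s}. t q \<in> int ` set js) \<and> int ` set js \<subseteq> t ` {1..s+1}" by blast
  qed
  finally show ?thesis .
qed

definition visited_sets :: "nat \<Rightarrow> nat \<Rightarrow> nat \<Rightarrow> nat set set" where
  "visited_sets s i j = {U. U \<subseteq> {i..j} \<and> i \<in> U \<and> j \<in> U \<and> card U = s + 1}"

lemma visited_sets_1:
  assumes "i < j"
  shows "visited_sets 1 i j = {{i, j}}"
proof (intro set_eqI iffI)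
  fix U assume U: "U \<in> visited_sets 1 i j"
  then have "{i, j} \<subseteq> U" "finite U" "card {i, j} = card U"
    using assms by (auto simp: visited_sets_def intro: finite_subset)
  then show "U \<in> {{i, j}}" using card_subset_eq by blast
qed (use assms in \<open>auto simp: visited_sets_def\<close>)

lemma visited_sets_2:
  assumes "i < j"
  shows "visited_sets 2 i j = (\<lambda>b. {i, b, j}) ` {i<..<j}"
proof (intro set_eqI iffI)
  fix U assume "U \<in> visited_sets 2 i j"
  then have U: "U \<subseteq> {i..j}" "i \<in> U" "j \<in> U" "card U = 3" by (auto simp: visited_sets_def)
  have "finite U" using U(1) finite_subset by blast
  then have "card (U - {i, j}) = 1" using U(2-4) assms by (simp add: card_Diff_subset)
  then obtain b where b: "U - {i, j} = {b}" by (rule card_1_singletonE)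
  then have "b \<in> {i<..<j}" using U(1) by fastforce
  moreover have "U = {i, b, j}" using b U(2,3) by blast
  ultimately show "U \<in> (\<lambda>b. {i, b, j}) ` {i<..<j}" by blast
qed (auto simp: visited_sets_def)

lemma visited_sets_3: "visited_sets 3 i (i + 3) = {{i, i + 1, i + 2, i + 3}}"
proof -
  have ivl: "{i..i + 3} = {i, i + 1, i + 2, i + 3}" by auto
  have "U \<in> visited_sets 3 i (i + 3) \<longleftrightarrow> U = {i..i + 3}" for U
    unfolding visited_sets_def using card_subset_eq[of "{i..i + 3}" U] by auto
  then show ?thesis unfolding ivl by blast
qed

lemma range_seqs_card_eq_UN_walks:
  assumes "i < j"
  shows "{js \<in> range_seqs r m i j. card (insert i (set js)) = s + 1} = (\<Union>U\<in>visited_sets s i j. walks r m i 0 U)"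
proof (intro set_eqI iffI)
  fix js assume "js \<in> {js \<in> range_seqs r m i j. card (insert i (set js)) = s + 1}"
  then have js: "js \<in> range_seqs r m i j" "card (insert i (set js)) = s + 1" by auto
  note bounds = range_seqs_bounds[OF js(1)]
  have "insert i (set js) \<in> visited_sets s i j" using bounds(2,3) js(2) assms by (auto simp: visited_sets_def)
  moreover have "js \<in> walks r m i 0 (insert i (set js))" using js(1) by (simp add: range_seqs_def walks_def)
  ultimately show "js \<in> (\<Union>U\<in>visited_sets s i j. walks r m i 0 U)" by blast
next
  fix js assume "js \<in> (\<Union>U\<in>visited_sets s i j. walks r m i 0 U)"
  then obtain U where U: "U \<subseteq> {i..j}" "j \<in> U" "card U = s + 1" and js: "js \<in> walks r m i 0 U"
    by (auto simp: visited_sets_def)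
  have w: "ends_at_first_zero r m i 0 js" "sorted (i # js)" "insert i (set js) = U"
    using js by (simp_all add: walks_def)
  have ne: "js \<noteq> []" using w(1) by (cases js) simp_all
  have "last js \<le> j" using last_in_set[OF ne] w(3) U(1) by auto
  moreover have "j \<in> set js" using U(2) w(3) assms by auto
  then have "j \<le> last js" using w(2) sorted_le_last[of js] by simp
  ultimately have "last js = j" by simp
  then show "js \<in> {js \<in> range_seqs r m i j. card (insert i (set js)) = s + 1}"
    using w U(3) by (simp add: range_seqs_def)
qed

lemma kzs_paths_eq_image:
  assumes "0 < r" "1 \<le> i" "i < j" "j \<le> n"
  shows "kzs_paths n r m s i j = path_of r m i 0 ` (\<Union>U\<in>visited_sets s i j. walks r m i 0 U)"
proof -
  have "kzs_paths n r m s i j = path_of r m i 0 ` {js \<in> range_seqs r m i j. k_step s (path_of r m i 0 js)}"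
    unfolding kzs_paths_def zs_paths_eq_image[OF assms(1,2,4)] by blast
  also have "{js \<in> range_seqs r m i j. k_step s (path_of r m i 0 js)}
      = {js \<in> range_seqs r m i j. card (insert i (set js)) = s + 1}"
    using k_step_path_of_iff by blast
  finally show ?thesis unfolding range_seqs_card_eq_UN_walks[OF assms(3)] .
qed

lemma zs_paths_eq_UN_kzs_paths:
  assumes "0 < r" "1 \<le> i" "i < j" "j \<le> n"
  shows "zs_paths n r m i j = (\<Union>s\<in>{1..j-i}. kzs_paths n r m s i j)"
proof (intro equalityI subsetI)
  fix \<alpha> assume \<alpha>zs: "\<alpha> \<in> zs_paths n r m i j"
  then obtain js where \<alpha>: "\<alpha> = path_of r m i 0 js" and js: "js \<in> range_seqs r m i j"
    unfolding zs_paths_eq_image[OF assms(1,2,4)] by blast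
  note bounds = range_seqs_bounds[OF js]
  define s where "s = card (insert i (set js)) - 1"
  have "{i, j} \<subseteq> insert i (set js)" "insert i (set js) \<subseteq> {i..j}" using bounds assms(3) by auto
  then have "card {i, j} \<le> card (insert i (set js))" "card (insert i (set js)) \<le> card {i..j}"
    by (intro card_mono; simp)+
  then have s: "s \<in> {1..j-i}" "card (insert i (set js)) = s + 1" using assms(3) by (auto simp: s_def)
  then have "k_step s \<alpha>" using k_step_path_of_iff[OF js] \<alpha> by simp
  then show "\<alpha> \<in> (\<Union>s\<in>{1..j-i}. kzs_paths n r m s i j)" using s(1) \<alpha>zs by (auto simp: kzs_paths_def)
qed (auto simp: kzs_paths_def)

lemma kzs_paths_disjoint:
  assumes "0 < r" "1 \<le> i" "j \<le> n" "s \<noteq> s'"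
  shows "kzs_paths n r m s i j \<inter> kzs_paths n r m s' i j = {}"
proof -
  have "\<alpha> \<notin> kzs_paths n r m s' i j" if \<alpha>: "\<alpha> \<in> kzs_paths n r m s i j" for \<alpha>
  proof -
    obtain js where "\<alpha> = path_of r m i 0 js" "js \<in> range_seqs r m i j"
      using \<alpha> unfolding kzs_paths_def zs_paths_eq_image[OF assms(1-3)] by blast
    then show ?thesis using \<alpha> assms(4) k_step_path_of_iff by (auto simp: kzs_paths_def)
  qed
  then show ?thesis by blast
qed

lemma card_zs_paths_eq_sum:
  assumes "0 < r" "1 \<le> i" "i < j" "j \<le> n" "\<And>s. s \<in> {1..j-i} \<Longrightarrow> finite (kzs_paths n r m s i j)"
  shows "finite (zs_paths n r m i j) \<and> card (zs_paths n r m i j) = (\<Sum>s=1..j-i. card (kzs_paths n r m s i j))"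
  unfolding zs_paths_eq_UN_kzs_paths[OF assms(1-4)]
  using card_UN_disjoint[of "{1..j-i}" "\<lambda>s. kzs_paths n r m s i j"] assms(5)
    kzs_paths_disjoint[OF assms(1,2,4)] by simp

lemma card_image_UN_walks:
  assumes "finite \<U>" "\<And>U. U \<in> \<U> \<Longrightarrow> finite (walks r m i x U)"
  shows "finite (path_of r m i x ` (\<Union>U\<in>\<U>. walks r m i x U))
    \<and> card (path_of r m i x ` (\<Union>U\<in>\<U>. walks r m i x U)) = (\<Sum>U\<in>\<U>. card (walks r m i x U))"
proof -
  have inj: "inj (path_of r m i x)"
    by (rule inj_on_inverseI[of _ "map e_j"]) (rule map_range_path_of)
  have "card (\<Union>U\<in>\<U>. walks r m i x U) = (\<Sum>U\<in>\<U>. card (walks r m i x U))"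
    using assms by (intro card_UN_disjoint) (auto simp: walks_def)
  then show ?thesis using assms by (simp add: card_image inj_on_subset[OF inj])
qed

section \<open>Counting 0-simple paths\<close>

lemma card_kzs_paths_1:
  assumes "0 < r" "1 \<le> i" "i < j" "j \<le> n" "coprime (m i) r" "coprime (m j) r"
  shows "card (kzs_paths n r m 1 i j) = r"
  using card_image_UN_walks[of "{{i, j}}" r m i 0] card_walks_pair_from_0[OF assms(3,5,6,1)]
  unfolding kzs_paths_eq_image[OF assms(1-4)] visited_sets_1[OF assms(3)] by simp

lemma card_kzs_paths_2:
  assumes "0 < r" "1 \<le> i" "i < j" "j \<le> n" and cop: "\<And>k. i \<le> k \<Longrightarrow> k \<le> j \<Longrightarrow> coprime (m k) r"
  shows "card (kzs_paths n r m 2 i j) = r * (r - 1) div 2 * (j - i - 1)"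
proof -
  have walks: "finite (walks r m i 0 {i, b, j}) \<and> card (walks r m i 0 {i, b, j}) = r * (r - 1) div 2"
    if "b \<in> {i<..<j}" for b
    using card_walks_triple_from_0[of i b j m r] that cop assms(1) by simp
  have inj: "inj_on (\<lambda>b. {i, b, j}) {i<..<j}"
  proof (rule inj_onI)
    fix b b' assume "b \<in> {i<..<j}" "b' \<in> {i<..<j}" "{i, b, j} = {i, b', j}"
    then show "b = b'" by (metis insertCI insertE less_irrefl greaterThanLessThan_iff singletonD)
  qed
  have "card (kzs_paths n r m 2 i j) = (\<Sum>U\<in>(\<lambda>b. {i, b, j}) ` {i<..<j}. card (walks r m i 0 U))"
  proof -
    have "finite (walks r m i 0 U)" if "U \<in> (\<lambda>b. {i, b, j}) ` {i<..<j}" for U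
      using that walks by blast
    then show ?thesis
      unfolding kzs_paths_eq_image[OF assms(1-4)] visited_sets_2[OF assms(3)]
      using card_image_UN_walks[of "(\<lambda>b. {i, b, j}) ` {i<..<j}" r m i 0] by simp
  qed
  also have "\<dots> = (\<Sum>b\<in>{i<..<j}. card (walks r m i 0 {i, b, j}))" by (simp add: sum.reindex inj)
  also have "\<dots> = (\<Sum>b\<in>{i<..<j}. r * (r - 1) div 2)" using walks by simp
  finally show ?thesis by simp
qed

lemma kzs_paths_3_card_cong:
  assumes "2 \<le> r" "1 \<le> i" "i + 3 \<le> n" and cop: "\<And>k. i \<le> k \<Longrightarrow> k \<le> i + 3 \<Longrightarrow> coprime (m k) r"
  shows "finite (kzs_paths n r m 3 i (i + 3)) \<and> (\<forall>inv :: int. [inv * int (m (i + 2)) = 1] (mod int r) \<longrightarrow>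
    [int (card (kzs_paths n r m 3 i (i + 3)))
      = - inv * int (m (i + 1)) * (int r * (int r - 1) * (int r - 2) div 3)] (mod int r))"
proof -
  have "kzs_paths n r m 3 i (i + 3) = path_of r m i 0 ` (\<Union>U\<in>{{i, i + 1, i + 2, i + 3}}. walks r m i 0 U)"
    using kzs_paths_eq_image[of r i "i + 3" n m 3] visited_sets_3[of i] assms(1-3) by simp
  then show ?thesis
    using card_image_UN_walks[of "{{i, i + 1, i + 2, i + 3}}" r m i 0]
      card_walks_quadruple_from_0_cong[of i "i + 1" "i + 2" "i + 3" m r] cop assms(1) by simp
qed

lemma card_zs_paths_2:
  assumes "2 \<le> r" "1 \<le> i" "i + 2 \<le> n" and cop: "\<And>k. i \<le> k \<Longrightarrow> k \<le> i + 2 \<Longrightarrow> coprime (m k) r"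
  shows "card (zs_paths n r m i (i + 2)) = r * (r + 1) div 2"
proof -
  have r: "0 < r" using assms(1) by simp
  have k1: "card (kzs_paths n r m 1 i (i + 2)) = r"
    using card_kzs_paths_1[OF r assms(2) _ assms(3)] cop by simp
  have k2: "card (kzs_paths n r m 2 i (i + 2)) = r * (r - 1) div 2"
    using card_kzs_paths_2[OF r assms(2) _ assms(3)] cop by simp
  have "2 * 1 \<le> r * (r - 1)" using assms(1) by (intro mult_le_mono) auto
  then have "finite (kzs_paths n r m s i (i + 2))" if "s \<in> {1, 2}" for s
    using that card_ge_0_finite[of "kzs_paths n r m 1 i (i + 2)"] card_ge_0_finite[of "kzs_paths n r m 2 i (i + 2)"]
    unfolding k1 k2 using r by auto
  moreover have "{1..i + 2 - i} = {1, 2::nat}" by auto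
  ultimately have "card (zs_paths n r m i (i + 2)) = r + r * (r - 1) div 2"
    using card_zs_paths_eq_sum[OF r assms(2) _ assms(3)] k1 k2 by simp
  also have "\<dots> = r * (r + 1) div 2"
  proof -
    have "r * (r + 1) = r * (r - 1) + 2 * r" using r by (cases r) (simp_all add: algebra_simps)
    then show ?thesis by simp
  qed
  finally show ?thesis .
qed

lemma zs_paths_3_card_cong:
  assumes "2 \<le> r" "1 \<le> i" "i + 3 \<le> n" and cop: "\<And>k. i \<le> k \<Longrightarrow> k \<le> i + 3 \<Longrightarrow> coprime (m k) r"
  shows "finite (zs_paths n r m i (i + 3)) \<and> (\<forall>inv :: int. [inv * int (m (i + 2)) = 1] (mod int r) \<longrightarrow>
    [int (card (zs_paths n r m i (i + 3)))
      = - inv * int (m (i + 1)) * (int r * (int r - 1) * (int r - 2) div 3)] (mod int r))"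
proof -
  have r: "0 < r" using assms(1) by simp
  note k3 = kzs_paths_3_card_cong[of r i n m, OF assms]
  have k1: "card (kzs_paths n r m 1 i (i + 3)) = r"
    using card_kzs_paths_1[OF r assms(2) _ assms(3)] cop by simp
  have k2: "card (kzs_paths n r m 2 i (i + 3)) = r * (r - 1) div 2 * 2"
    using card_kzs_paths_2[OF r assms(2) _ assms(3)] cop by simp
  have "2 * 1 \<le> r * (r - 1)" using assms(1) by (intro mult_le_mono) auto
  then have "finite (kzs_paths n r m s i (i + 3))" if "s \<in> {1, 2, 3}" for s
    using that k3 card_ge_0_finite[of "kzs_paths n r m 1 i (i + 3)"] card_ge_0_finite[of "kzs_paths n r m 2 i (i + 3)"]
    unfolding k1 k2 using r assms(1) by auto
  moreover have "{1..i + 3 - i} = {1, 2, 3::nat}" by auto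
  ultimately have "finite (zs_paths n r m i (i + 3)) \<and> card (zs_paths n r m i (i + 3))
      = r + (r * (r - 1) div 2 * 2 + card (kzs_paths n r m 3 i (i + 3)))"
    using card_zs_paths_eq_sum[OF r assms(2) _ assms(3)] k1 k2 by simp
  moreover have "r + r * (r - 1) div 2 * 2 = r * r"
    using r by (cases r) (simp_all add: algebra_simps)
  ultimately have "finite (zs_paths n r m i (i + 3))"
    and "card (zs_paths n r m i (i + 3)) = r * r + card (kzs_paths n r m 3 i (i + 3))" by linarith+
  then have fin: "finite (zs_paths n r m i (i + 3))"
    and zs: "[int (card (zs_paths n r m i (i + 3))) = int (card (kzs_paths n r m 3 i (i + 3)))] (mod int r)"
    by (simp_all add: cong_def)
  show ?thesis
  proof (intro conjI allI impI fin)
    fix inv :: int assume "[inv * int (m (i + 2)) = 1] (mod int r)"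
    then show "[int (card (zs_paths n r m i (i + 3)))
      = - inv * int (m (i + 1)) * (int r * (int r - 1) * (int r - 2) div 3)] (mod int r)"
      using k3 cong_trans[OF zs] by blast
  qed
qed

theorem lemma7p5:
  fixes n r :: nat and m :: "nat \<Rightarrow> nat"
  assumes r2: "r \<ge> 2"
    and cop: "\<And>i. 1 \<le> i \<Longrightarrow> i \<le> n \<Longrightarrow> coprime (m i) r"
  shows
    "(\<forall>i j. 1 \<le> i \<and> i + 1 \<le> j \<and> j \<le> n \<longrightarrow> card (kzs_paths n r m 1 i j) = r)
   \<and> (\<forall>i j. 1 \<le> i \<and> i + 2 \<le> j \<and> j \<le> n \<longrightarrow>
        card (kzs_paths n r m 2 i j) = r * (r - 1) div 2 * (j - i - 1))
   \<and> (\<forall>i. 1 \<le> i \<and> i + 3 \<le> n \<longrightarrow> finite (kzs_paths n r m 3 i (i + 3)) \<and>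
        (\<forall>inv :: int. [inv * int (m (i + 2)) = 1] (mod int r) \<longrightarrow>
          [int (card (kzs_paths n r m 3 i (i + 3)))
             = - inv * int (m (i + 1)) * (int r * (int r - 1) * (int r - 2) div 3)] (mod int r)))
   \<and> (\<forall>i. 1 \<le> i \<and> i + 2 \<le> n \<longrightarrow> card (zs_paths n r m i (i + 2)) = r * (r + 1) div 2)
   \<and> (\<forall>i. 1 \<le> i \<and> i + 3 \<le> n \<longrightarrow> finite (zs_paths n r m i (i + 3)) \<and>
        (\<forall>inv :: int. [inv * int (m (i + 2)) = 1] (mod int r) \<longrightarrow>
          [int (card (zs_paths n r m i (i + 3)))
             = - inv * int (m (i + 1)) * (int r * (int r - 1) * (int r - 2) div 3)] (mod int r)))"
proof (intro conjI allI impI)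
  have r: "0 < r" using r2 by simp
  have cop_ivl: "\<And>k. a \<le> k \<Longrightarrow> k \<le> b \<Longrightarrow> coprime (m k) r" if "1 \<le> a" "b \<le> n" for a b
    using cop that by simp
  fix i
  show "card (kzs_paths n r m 1 i j) = r" if "1 \<le> i \<and> i + 1 \<le> j \<and> j \<le> n" for j
    using that card_kzs_paths_1[OF r, of i j n m] cop by simp
  show "card (kzs_paths n r m 2 i j) = r * (r - 1) div 2 * (j - i - 1)"
    if "1 \<le> i \<and> i + 2 \<le> j \<and> j \<le> n" for j
    using that card_kzs_paths_2[OF r, of i j n m] cop_ivl[of i j] by simp
  assume i: "1 \<le> i \<and> i + 2 \<le> n"
  then show "card (zs_paths n r m i (i + 2)) = r * (r + 1) div 2"
    using card_zs_paths_2[OF r2, of i n m] cop_ivl[of i "i + 2"] by simp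
next
  fix i assume i: "1 \<le> i \<and> i + 3 \<le> n"
  then have cop3: "\<And>k. i \<le> k \<Longrightarrow> k \<le> i + 3 \<Longrightarrow> coprime (m k) r" using cop by simp
  show "finite (kzs_paths n r m 3 i (i + 3))" "finite (zs_paths n r m i (i + 3))"
    using kzs_paths_3_card_cong[where i = i and n = n and m = m, OF r2 _ _ cop3]
      zs_paths_3_card_cong[where i = i and n = n and m = m, OF r2 _ _ cop3] i by simp_all
  fix inv :: int assume "[inv * int (m (i + 2)) = 1] (mod int r)"
  then show "[int (card (kzs_paths n r m 3 i (i + 3)))
        = - inv * int (m (i + 1)) * (int r * (int r - 1) * (int r - 2) div 3)] (mod int r)"
    and "[int (card (zs_paths n r m i (i + 3)))
        = - inv * int (m (i + 1)) * (int r * (int r - 1) * (int r - 2) div 3)] (mod int r)"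
    using kzs_paths_3_card_cong[where i = i and n = n and m = m, OF r2 _ _ cop3]
      zs_paths_3_card_cong[where i = i and n = n and m = m, OF r2 _ _ cop3] i by simp_all
qed

end
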